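(* For every $\lambda\in\mathbb{C}$ and every integer $m\ge1$, in $\mathcal{A}_0$ we have $$a^m=Q_{m-1}(\lambda)(a-\lambda b)+R_m(\lambda),$$ where $Q_{m-1}(\lambda)=\sum_{j=0}^{m-1}\lambda(\lambda+1)\cdots(\lambda+j-1)\,a^{m-1-j}b^j=a^{m-1}+\lambda a^{m-2}b+\dots+\lambda(\lambda+1)\cdots(\lambda+m-2)b^{m-1}$ (the $j=0$ coefficient being $1$) and $R_m(\lambda)=\lambda(\lambda+1)\cdots(\lambda+m-1)b^m$.
   Context: $\mathcal{A}_0$ is the $\mathbb{C}$-algebra of polynomials in two variables $a,b$ subject to the commutation relation $ab-ba=b^2$. *)

theory Defs
  imports Complex_Main
begin

text \<open>A complex algebra structure on a ring 'a is given by a ring homomorphism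
  from the complex numbers into the centre of 'a.\<close>
definition complex_structure :: "(complex \<Rightarrow> 'a::ring_1) \<Rightarrow> bool" where
  "complex_structure emb \<longleftrightarrow>
     (\<forall>x y. emb (x + y) = emb x + emb y) \<and> (\<forall>x y. emb (x * y) = emb x * emb y) \<and>
     emb 1 = 1 \<and> (\<forall>c y. emb c * y = y * emb c)"

end

theory Submission
  imports Defs
begin

text \<open>From \<open>b a = a b - b^2\<close> one gets \<open>b^j a = a b^j - j b^(j+1)\<close>; as \<open>\<lambda>\<close> is central,
  \<open>a^k b^j (a - \<lambda> b) = a^(k+1) b^j - (\<lambda> + j) a^k b^(j+1)\<close>. Since
  \<open>(\<lambda>)\<^sub>j (\<lambda> + j) = (\<lambda>)\<^sub>j\<^sub>+\<^sub>1\<close>, the \<open>j\<close>-th summand of \<open>Q\<^sub>m\<^sub>-\<^sub>1(\<lambda>) (a - \<lambda> b)\<close> is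
  \<open>T j - T (j+1)\<close> with \<open>T j = (\<lambda>)\<^sub>j a^(m-j) b^j\<close>, and the sum telescopes to \<open>a^m - R\<^sub>m(\<lambda>)\<close>.
  The identity holds for \<open>m = 0\<close> too.\<close>

lemma power_mult_swap:
  fixes a b :: "'a::ring_1"
  assumes "a * b - b * a = b ^ 2"
  shows "b ^ j * a = a * b ^ j - of_nat j * b ^ Suc j"
proof (induction j)
  case 0
  then show ?case by simp
next
  case (Suc j)
  have ba: "b * a = a * b - b * b"
    using assms by (simp add: power2_eq_square algebra_simps)
  have "b ^ Suc j * a = b ^ j * (b * a)"
    by (simp only: power_Suc2 mult.assoc)
  also have "\<dots> = b ^ j * a * b - b ^ Suc (Suc j)"
    unfolding ba by (simp only: right_diff_distrib power_Suc2 mult.assoc)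
  also have "\<dots> = (a * b ^ j - of_nat j * b ^ Suc j) * b - b ^ Suc (Suc j)"
    using Suc by simp
  also have "\<dots> = a * b ^ Suc j - of_nat (Suc j) * b ^ Suc (Suc j)"
    by (simp add: power_Suc2 mult.assoc algebra_simps power_commutes)
  finally show ?case .
qed

lemma monomial_mult_sub_central:
  fixes a b c :: "'a::ring_1"
  assumes "a * b - b * a = b ^ 2" and central: "\<And>y. c * y = y * c"
  shows "a ^ k * b ^ j * (a - c * b) = a ^ Suc k * b ^ j - (c + of_nat j) * (a ^ k * b ^ Suc j)"
proof -
  have times_a: "a ^ k * b ^ j * a = a ^ Suc k * b ^ j - of_nat j * (a ^ k * b ^ Suc j)"
    by (simp add: mult.assoc power_mult_swap[OF assms(1)] right_diff_distrib
        mult_of_nat_commute power_Suc2 del: power_Suc)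
  have "a ^ k * b ^ j * (c * b) = a ^ k * b ^ Suc j * c"
    by (simp only: central[of b] power_Suc2 mult.assoc)
  then have times_cb: "a ^ k * b ^ j * (c * b) = c * (a ^ k * b ^ Suc j)"
    by (simp only: central)
  show ?thesis
    by (simp add: right_diff_distrib distrib_right times_a times_cb)
qed

lemma complex_structure_of_nat:
  assumes "complex_structure emb"
  shows "emb (of_nat n) = of_nat n"
proof (induction n)
  case 0
  have "emb 0 + emb 0 = emb 0"
    using assms unfolding complex_structure_def by (metis add_0)
  then show ?case by simp
next
  case (Suc n)
  then show ?case
    using assms unfolding complex_structure_def by simp
qed

lemma complex_structure_pochhammer_Suc:
  assumes "complex_structure emb"
  shows "emb (pochhammer z (Suc j)) = emb (pochhammer z j) * (emb z + of_nat j)"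
  using assms complex_structure_of_nat[OF assms]
  unfolding complex_structure_def by (simp add: pochhammer_Suc)

theorem lemma1p2p2:
  fixes emb :: "complex \<Rightarrow> 'a::ring_1" and a b :: 'a and lam :: complex and m :: nat
  assumes "complex_structure emb"
    and "a * b - b * a = b ^ 2"
    and "m \<ge> 1"
  shows "a ^ m = (\<Sum>j<m. emb (pochhammer lam j) * a ^ (m - 1 - j) * b ^ j) * (a - emb lam * b)
                 + emb (pochhammer lam m) * b ^ m"
proof -
  have central: "\<And>c y. emb c * y = y * emb c" and one: "emb 1 = 1"
    using assms(1) unfolding complex_structure_def by blast+
  define T where "T j = emb (pochhammer lam j) * a ^ (m - j) * b ^ j" for j
  have summand: "emb (pochhammer lam j) * a ^ (m - 1 - j) * b ^ j * (a - emb lam * b)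
      = T j - T (Suc j)" if "j < m" for j
  proof -
    have "m - 1 - j = m - Suc j" and "Suc (m - Suc j) = m - j"
      using that by simp_all
    then have "emb (pochhammer lam j) * a ^ (m - 1 - j) * b ^ j * (a - emb lam * b)
        = emb (pochhammer lam j) * (a ^ (m - Suc j) * b ^ j * (a - emb lam * b))"
      by (simp only: mult.assoc)
    also have "\<dots> = emb (pochhammer lam j)
        * (a ^ (m - j) * b ^ j - (emb lam + of_nat j) * (a ^ (m - Suc j) * b ^ Suc j))"
      by (simp only: monomial_mult_sub_central[OF assms(2) central] \<open>Suc (m - Suc j) = m - j\<close>)
    also have "\<dots> = T j - T (Suc j)"
      by (simp only: T_def complex_structure_pochhammer_Suc[OF assms(1)] mult.assoc
          right_diff_distrib)
    finally show ?thesis .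
  qed
  have "(\<Sum>j<m. emb (pochhammer lam j) * a ^ (m - 1 - j) * b ^ j) * (a - emb lam * b)
      = (\<Sum>j<m. T j - T (Suc j))"
    unfolding sum_distrib_right by (intro sum.cong refl summand) simp
  also have "\<dots> = T 0 - T m"
    by (rule sum_lessThan_telescope')
  also have "\<dots> = a ^ m - emb (pochhammer lam m) * b ^ m"
    by (simp only: T_def pochhammer_0 one minus_nat.diff_0 diff_self_eq_0 power_0
        mult_1_left mult_1_right)
  finally show ?thesis
    by (simp only: diff_add_cancel)
qed

end
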